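(* Let $x,y$ be allocation rules of $n$-agent rank-based auctions, with bids from the all-pay auction with rule $x$. If $\delta_N\le 1/n$, then $$\int_{[0,\delta_N]\cup[1-\delta_N,1]} Z_y(q)\,b'(q)\,dq\le e\,\delta_N\,y'(\delta_N)+e\,\delta_N^2\,y'(1-\delta_N).$$
   Context: Agents have values i.i.d. from a continuous distribution $F$ on $[0,1]$; quantile $q=F(v)$, $v(q)=F^{-1}(q)$. For $k\in\{1,\dots,n-1\}$ the $k$-highest-bids-win allocation rule is $x_k(q)=\sum_{i=0}^{k-1}\binom{n-1}{i}q^{n-1-i}(1-q)^i$; $x_0\equiv0$, $x_n\equiv1$. A rank-based auction with position weights $1\ge w_1\ge\cdots\ge w_n\ge 0$ ($w_{n+1}:=0$) has allocation rule $\sum_{k=1}^{n}(w_k-w_{k+1})x_k(q)$. In the all-pay auction with rule $x$, the Bayes–Nash equilibrium bid function satisfies $b(0)=0$, $b'(q)=v(q)x'(q)$. $Z_y(q)=(1-q)\,y'(q)/x'(q)$. $\delta_N=\max(25\log\log N,n)/N$ for a sample size $N$. *)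

theory Defs
  imports "HOL-Probability.Probability"
begin

text \<open>k-highest-bids-win allocation rule for n agents, as a function of the quantile q;
  x_0 = 0 and x_n = 1.\<close>
definition xk :: "nat \<Rightarrow> nat \<Rightarrow> real \<Rightarrow> real" where
  "xk n k q = (if k = 0 then 0 else if k \<ge> n then 1
     else (\<Sum>i<k. real (n - 1 choose i) * q ^ (n - 1 - i) * (1 - q) ^ i))"

definition rank_alloc :: "nat \<Rightarrow> (nat \<Rightarrow> real) \<Rightarrow> real \<Rightarrow> real" where
  "rank_alloc n w q = (\<Sum>k=1..n. (w k - (if k = n then 0 else w (Suc k))) * xk n k q)"

definition rank_based_alloc :: "nat \<Rightarrow> (real \<Rightarrow> real) \<Rightarrow> bool" where
  "rank_based_alloc n x \<longleftrightarrow>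
     (\<exists>w. w 1 \<le> 1 \<and> (\<forall>k\<in>{1..<n}. w (Suc k) \<le> w k) \<and> 0 \<le> w n \<and> x = rank_alloc n w)"

definition value_of_quantile :: "real measure \<Rightarrow> real \<Rightarrow> real" where
  "value_of_quantile M q = Inf {t \<in> {0..1}. q \<le> cdf M t}"

text \<open>Derivative of the all-pay equilibrium bid: b'(q) = v(q) x'(q).\<close>
definition bid_deriv :: "real measure \<Rightarrow> (real \<Rightarrow> real) \<Rightarrow> real \<Rightarrow> real" where
  "bid_deriv M x q = value_of_quantile M q * deriv x q"

definition Zfun :: "(real \<Rightarrow> real) \<Rightarrow> (real \<Rightarrow> real) \<Rightarrow> real \<Rightarrow> real" where
  "Zfun y x q = (1 - q) * deriv y q / deriv x q"

definition deltaN :: "nat \<Rightarrow> nat \<Rightarrow> real" where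
  "deltaN n N = max (25 * ln (ln (real N))) (real n) / real N"

end

theory Submission
  imports Defs
begin

text \<open>The integrand is at most (1 - q) y'(q): the factor x'(q) of the bid derivative v(q) x'(q)
  cancels the denominator of Z_y, and v(q) \<le> 1. (So neither the continuity of F nor the form
  of x plays a role.) The derivative y' is a nonnegative combination of the densities
  (n - 1) C(n-2, k-1) q^(n-1-k) (1 - q)^(k-1) of the rules x_k. On [0, \<delta>] the factor q^(n-1-k)
  grows with q, while (1 - q)^(k-1) lies between 1 and (1 - \<delta>)^(k-1) \<ge> (1 - 1/n)^(n-1) \<ge> 1/e;
  hence y'(q) \<le> e y'(\<delta>) there. Symmetrically y'(q) \<le> e y'(1 - \<delta>) on [1 - \<delta>, 1], where
  moreover 1 - q \<le> \<delta>.\<close>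

lemma binomial_lower_sum_has_real_derivative:
  fixes q :: real
  assumes "k < m"
  shows "((\<lambda>q. \<Sum>i<Suc k. real (m choose i) * q ^ (m - i) * (1 - q) ^ i) has_real_derivative
          real m * real (m - 1 choose k) * q ^ (m - 1 - k) * (1 - q) ^ k) (at q)"
  using assms
proof (induction k)
  case 0
  show ?case by (auto intro!: derivative_eq_intros)
next
  case (Suc k)
  have new_term: "((\<lambda>q. real (m choose Suc k) * q ^ (m - Suc k) * (1 - q) ^ Suc k) has_real_derivative
      real (m choose Suc k) * (real (m - Suc k) * q ^ (m - Suc k - 1) * (1 - q) ^ Suc k
        - q ^ (m - Suc k) * (real (Suc k) * (1 - q) ^ k))) (at q)"
    by (rule derivative_eq_intros refl)+ (simp add: algebra_simps)
  have absorb_lower: "real (Suc k) * real (m choose Suc k) = real m * real (m - 1 choose k)"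
    using times_binomial_minus1_eq[of "Suc k" m] by (metis diff_Suc_1 of_nat_mult zero_less_Suc)
  have absorb_upper: "real (m - Suc k) * real (m choose Suc k) = real m * real (m - 1 choose Suc k)"
    using binomial_absorb_comp[of m "Suc k"] by (metis of_nat_mult)
  have "real (m choose Suc k) * (real (m - Suc k) * q ^ (m - Suc k - 1) * (1 - q) ^ Suc k
        - q ^ (m - Suc k) * (real (Suc k) * (1 - q) ^ k))
      = (real (m - Suc k) * real (m choose Suc k)) * q ^ (m - 1 - Suc k) * (1 - q) ^ Suc k
        - (real (Suc k) * real (m choose Suc k)) * q ^ (m - 1 - k) * (1 - q) ^ k"
    by (simp add: algebra_simps)
  also have "\<dots> = real m * real (m - 1 choose Suc k) * q ^ (m - 1 - Suc k) * (1 - q) ^ Suc k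
        - real m * real (m - 1 choose k) * q ^ (m - 1 - k) * (1 - q) ^ k"
    unfolding absorb_lower absorb_upper ..
  finally have "real m * real (m - 1 choose k) * q ^ (m - 1 - k) * (1 - q) ^ k
      + real (m choose Suc k) * (real (m - Suc k) * q ^ (m - Suc k - 1) * (1 - q) ^ Suc k
        - q ^ (m - Suc k) * (real (Suc k) * (1 - q) ^ k))
      = real m * real (m - 1 choose Suc k) * q ^ (m - 1 - Suc k) * (1 - q) ^ Suc k"
    by simp
  then show ?case
    using DERIV_add[OF Suc.IH[OF Suc_lessD[OF Suc.prems]] new_term]
    unfolding sum.lessThan_Suc[of _ "Suc k"] by simp
qed

definition xk_deriv :: "nat \<Rightarrow> nat \<Rightarrow> real \<Rightarrow> real" where
  "xk_deriv n k q = (if 1 \<le> k \<and> k < n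
     then real (n - 1) * real (n - 2 choose (k - 1)) * q ^ (n - 1 - k) * (1 - q) ^ (k - 1) else 0)"

lemma has_real_derivative_xk:
  assumes "1 \<le> k" "k \<le> n"
  shows "(xk n k has_real_derivative xk_deriv n k q) (at q)"
proof (cases "k < n")
  case True
  have "xk n k = (\<lambda>q. \<Sum>i<Suc (k - 1). real (n - 1 choose i) * q ^ (n - 1 - i) * (1 - q) ^ i)"
    using assms True by (auto simp: xk_def fun_eq_iff)
  moreover have "n - 1 - 1 - (k - 1) = n - 1 - k" "n - 1 - 1 = n - 2" using assms by auto
  ultimately show ?thesis
    using binomial_lower_sum_has_real_derivative[of "k - 1" "n - 1" q] assms True
    by (simp add: xk_deriv_def)
next
  case False
  then have "xk n k = (\<lambda>q. 1)" using assms by (auto simp: xk_def fun_eq_iff)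
  then show ?thesis using False by (simp add: xk_deriv_def)
qed

lemma xk_deriv_nonneg: "0 \<le> q \<Longrightarrow> q \<le> 1 \<Longrightarrow> 0 \<le> xk_deriv n k q"
  by (simp add: xk_deriv_def)

lemma deriv_rank_alloc:
  "deriv (rank_alloc n w) q = (\<Sum>k=1..n. (w k - (if k = n then 0 else w (Suc k))) * xk_deriv n k q)"
proof (rule DERIV_imp_deriv)
  have "rank_alloc n w = (\<lambda>q. \<Sum>k=1..n. (w k - (if k = n then 0 else w (Suc k))) * xk n k q)"
    by (simp add: rank_alloc_def fun_eq_iff)
  then show "(rank_alloc n w has_real_derivative
      (\<Sum>k=1..n. (w k - (if k = n then 0 else w (Suc k))) * xk_deriv n k q)) (at q)"
    by (auto intro!: DERIV_sum DERIV_cmult has_real_derivative_xk)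
qed

lemma deriv_rank_based_alloc_le:
  assumes "rank_based_alloc n y" "c \<ge> 0"
    and "\<And>k. 1 \<le> k \<Longrightarrow> k < n \<Longrightarrow> xk_deriv n k q \<le> c * xk_deriv n k p"
  shows "deriv y q \<le> c * deriv y p"
proof -
  obtain w where w: "\<forall>k\<in>{1..<n}. w (Suc k) \<le> w k" "0 \<le> w n" "y = rank_alloc n w"
    using assms(1) unfolding rank_based_alloc_def by blast
  have "xk_deriv n k q \<le> c * xk_deriv n k p" for k
    using assms(3)[of k] by (cases "1 \<le> k \<and> k < n") (auto simp: xk_deriv_def)
  then have "deriv y q \<le> (\<Sum>k=1..n. (w k - (if k = n then 0 else w (Suc k))) * (c * xk_deriv n k p))"
    using w unfolding w(3) deriv_rank_alloc by (intro sum_mono mult_left_mono) auto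
  also have "\<dots> = c * deriv y p"
    unfolding w(3) deriv_rank_alloc by (simp add: sum_distrib_left mult_ac)
  finally show ?thesis .
qed

lemma deriv_rank_based_alloc_nonneg:
  assumes "rank_based_alloc n y" "0 \<le> q" "q \<le> 1"
  shows "0 \<le> deriv y q"
proof -
  obtain w where w: "\<forall>k\<in>{1..<n}. w (Suc k) \<le> w k" "0 \<le> w n" "y = rank_alloc n w"
    using assms(1) unfolding rank_based_alloc_def by blast
  then show ?thesis
    unfolding w(3) deriv_rank_alloc using xk_deriv_nonneg[OF assms(2,3)]
    by (intro sum_nonneg mult_nonneg_nonneg) auto
qed

lemma one_le_exp_mult_one_minus_power:
  fixes d :: real
  assumes "0 \<le> d" "d \<le> 1 / real n" "j < n"
  shows "1 \<le> exp 1 * (1 - d) ^ j"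
proof -
  have n: "0 < n" using assms(3) by simp
  have "1 / real n \<le> 1" by (auto simp: divide_le_eq_1)
  then have d_le_1: "d \<le> 1" using assms(2) by linarith
  have "1 \<le> exp 1 * (1 - 1 / real n) ^ (n - 1)"
  proof (cases "n = 1")
    case False
    then have "(1 + 1 / real (n - 1)) ^ (n - 1) \<le> exp 1"
      using n by (intro exp_ge_one_plus_x_over_n_power_n) auto
    moreover have "(1 + 1 / real (n - 1)) * (1 - 1 / real n) = 1"
      using n False by (simp add: field_simps)
    ultimately have "((1 + 1 / real (n - 1)) * (1 - 1 / real n)) ^ (n - 1)
        \<le> exp 1 * (1 - 1 / real n) ^ (n - 1)"
      unfolding power_mult_distrib using n
      by (intro mult_right_mono) (auto simp: field_simps)
    then show ?thesis using \<open>(1 + 1 / real (n - 1)) * (1 - 1 / real n) = 1\<close> by simp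
  qed simp
  also have "\<dots> \<le> exp 1 * (1 - d) ^ (n - 1)"
    using assms n by (intro mult_left_mono power_mono) auto
  also have "\<dots> \<le> exp 1 * (1 - d) ^ j"
    using assms d_le_1 by (intro mult_left_mono power_decreasing) auto
  finally show ?thesis .
qed

lemma power_mult_one_minus_power_le_exp:
  fixes q d :: real
  assumes "0 \<le> q" "q \<le> d" "d \<le> 1 / real n" "j < n"
  shows "q ^ i * (1 - q) ^ j \<le> exp 1 * (d ^ i * (1 - d) ^ j)"
proof -
  have "1 / real n \<le> 1" by (auto simp: divide_le_eq_1)
  then have d_le_1: "d \<le> 1" using assms(3) by linarith
  then have "(1 - q) ^ j \<le> exp 1 * (1 - d) ^ j"
    using assms one_le_exp_mult_one_minus_power[of d n j] power_le_one[of "1 - q" j] by simp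
  moreover have "q ^ i \<le> d ^ i" using assms by (intro power_mono) auto
  ultimately have "q ^ i * (1 - q) ^ j \<le> d ^ i * (exp 1 * (1 - d) ^ j)"
    using assms d_le_1 by (intro mult_mono) auto
  then show ?thesis by (simp add: mult_ac)
qed

lemma xk_deriv_le_exp_near_zero:
  assumes "0 \<le> q" "q \<le> d" "d \<le> 1 / real n"
  shows "xk_deriv n k q \<le> exp 1 * xk_deriv n k d"
proof (cases "1 \<le> k \<and> k < n")
  case True
  then have "q ^ (n - 1 - k) * (1 - q) ^ (k - 1) \<le> exp 1 * (d ^ (n - 1 - k) * (1 - d) ^ (k - 1))"
    using power_mult_one_minus_power_le_exp[OF assms, where j = "k - 1" and i = "n - 1 - k"]
    by (simp add: less_imp_diff_less)
  from mult_left_mono[OF this, of "real (n - 1) * real (n - 2 choose (k - 1))"] True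
  show ?thesis by (simp add: xk_deriv_def mult_ac)
qed (auto simp: xk_deriv_def)

lemma xk_deriv_le_exp_near_one:
  assumes "1 - d \<le> q" "q \<le> 1" "d \<le> 1 / real n"
  shows "xk_deriv n k q \<le> exp 1 * xk_deriv n k (1 - d)"
proof (cases "1 \<le> k \<and> k < n")
  case True
  then have "(1 - q) ^ (k - 1) * q ^ (n - 1 - k) \<le> exp 1 * (d ^ (k - 1) * (1 - d) ^ (n - 1 - k))"
    using power_mult_one_minus_power_le_exp[of "1 - q" d n "n - 1 - k" "k - 1"] assms by simp
  from mult_left_mono[OF this, of "real (n - 1) * real (n - 2 choose (k - 1))"] True
  show ?thesis by (simp add: xk_deriv_def mult_ac)
qed (auto simp: xk_deriv_def)

lemma deriv_rank_based_alloc_le_exp_near_zero: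
  assumes "rank_based_alloc n y" "0 \<le> q" "q \<le> d" "d \<le> 1 / real n"
  shows "deriv y q \<le> exp 1 * deriv y d"
  using assms by (intro deriv_rank_based_alloc_le xk_deriv_le_exp_near_zero) auto

lemma deriv_rank_based_alloc_le_exp_near_one:
  assumes "rank_based_alloc n y" "1 - d \<le> q" "q \<le> 1" "d \<le> 1 / real n"
  shows "deriv y q \<le> exp 1 * deriv y (1 - d)"
  using assms by (intro deriv_rank_based_alloc_le xk_deriv_le_exp_near_one) auto

lemma value_of_quantile_le_one:
  assumes "real_distribution M" "measure M {0..1} = 1" "q \<le> 1"
  shows "value_of_quantile M q \<le> 1"
  unfolding value_of_quantile_def
proof (rule cInf_lower)
  interpret real_distribution M by (fact assms(1))
  have "measure M {0..1} \<le> measure M {..1}"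
    by (intro finite_measure_mono) auto
  then show "1 \<in> {t \<in> {0..1}. q \<le> cdf M t}"
    using assms(2,3) by (simp add: cdf_def)
qed (auto intro: bdd_belowI[of _ 0])

text \<open>Where x'(q) = 0 the integrand is 0 because division by zero yields 0 in HOL.\<close>

lemma Zfun_mult_bid_deriv_le:
  assumes "value_of_quantile M q \<le> 1" "0 \<le> (1 - q) * deriv y q"
  shows "Zfun y x q * bid_deriv M x q \<le> (1 - q) * deriv y q"
proof (cases "deriv x q = 0")
  case False
  then have "Zfun y x q * bid_deriv M x q = (1 - q) * deriv y q * value_of_quantile M q"
    by (simp add: Zfun_def bid_deriv_def)
  then show ?thesis using assms by (simp add: mult_left_le)
qed (use assms in \<open>simp add: Zfun_def bid_deriv_def\<close>)

text \<open>The hypothesis 0 \<le> I covers a non-integrable f, whose integral is the junk value 0.\<close>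

lemma integral_le_of_has_integral_majorant:
  fixes f g :: "real \<Rightarrow> real"
  assumes "(g has_integral I) S" "\<And>x. x \<in> S \<Longrightarrow> f x \<le> g x" "0 \<le> I"
  shows "integral S f \<le> I"
  using has_integral_le[OF integrable_integral assms(1,2)] assms(3)
  by (cases "f integrable_on S") (auto simp: not_integrable_integral)

lemma has_integral_step_on_end_intervals:
  fixes a b d :: real
  assumes "0 \<le> d"
  shows "((\<lambda>q. (if q \<in> {0..d} then a else 0) + (if q \<in> {1 - d..1} then b else 0))
      has_integral a * d + b * d) ({0..d} \<union> {1 - d..1})"
proof (rule has_integral_add)
  show "((\<lambda>q. if q \<in> {0..d} then a else 0) has_integral a * d) ({0..d} \<union> {1 - d..1})"
    using has_integral_const_real[of a 0 d] assms
    by (subst has_integral_restrict) (auto simp: mult.commute)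
  show "((\<lambda>q. if q \<in> {1 - d..1} then b else 0) has_integral b * d) ({0..d} \<union> {1 - d..1})"
    using has_integral_const_real[of b "1 - d" 1] assms
    by (subst has_integral_restrict) (auto simp: mult.commute)
qed

lemma one_minus_mult_deriv_rank_based_alloc_le_steps:
  assumes y: "rank_based_alloc n y" and d: "0 \<le> d" "d \<le> 1 / real n"
    and q: "q \<in> {0..d} \<union> {1 - d..1}"
  shows "(1 - q) * deriv y q \<le> (if q \<in> {0..d} then exp 1 * deriv y d else 0)
      + (if q \<in> {1 - d..1} then exp 1 * d * deriv y (1 - d) else 0)"
proof -
  have "1 / real n \<le> 1" by (auto simp: divide_le_eq_1)
  then have "0 \<le> q" "q \<le> 1" using d q by auto
  then have y'_q: "0 \<le> deriv y q" by (rule deriv_rank_based_alloc_nonneg[OF y])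
  have steps_nonneg: "0 \<le> exp 1 * deriv y d" "0 \<le> exp 1 * d * deriv y (1 - d)"
    using d \<open>1 / real n \<le> 1\<close> deriv_rank_based_alloc_nonneg[OF y, of d]
      deriv_rank_based_alloc_nonneg[OF y, of "1 - d"] by auto
  have "(1 - q) * deriv y q \<le> exp 1 * deriv y d" if "q \<le> d"
  proof -
    have "(1 - q) * deriv y q \<le> deriv y q"
      using \<open>0 \<le> q\<close> \<open>q \<le> 1\<close> y'_q by (intro mult_left_le_one_le) auto
    also have "\<dots> \<le> exp 1 * deriv y d"
      using y \<open>0 \<le> q\<close> that d(2) by (rule deriv_rank_based_alloc_le_exp_near_zero)
    finally show ?thesis .
  qed
  moreover have "(1 - q) * deriv y q \<le> exp 1 * d * deriv y (1 - d)" if "1 - d \<le> q"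
  proof -
    have "deriv y q \<le> exp 1 * deriv y (1 - d)"
      using y that \<open>q \<le> 1\<close> d(2) by (rule deriv_rank_based_alloc_le_exp_near_one)
    then have "(1 - q) * deriv y q \<le> d * (exp 1 * deriv y (1 - d))"
      using that y'_q d by (intro mult_mono) auto
    then show ?thesis by (simp add: mult_ac)
  qed
  ultimately show ?thesis using q steps_nonneg by auto
qed

theorem mainTheorem9:
  fixes M :: "real measure" and n N :: nat and x y :: "real \<Rightarrow> real"
  assumes "real_distribution M"
    and "measure M {0..1} = 1"
    and "continuous_on UNIV (cdf M)"
    and "n \<ge> 1"
    and "rank_based_alloc n x"
    and "rank_based_alloc n y"
    and "N > 0"
    and "deltaN n N \<le> 1 / real n"
  shows "integral ({0..deltaN n N} \<union> {1 - deltaN n N..1}) (\<lambda>q. Zfun y x q * bid_deriv M x q)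
     \<le> exp 1 * deltaN n N * deriv y (deltaN n N) + exp 1 * (deltaN n N)^2 * deriv y (1 - deltaN n N)"
proof -
  define d where "d = deltaN n N"
  have "0 < real n / real N" using assms(4,7) by simp
  also have "\<dots> \<le> d" unfolding d_def deltaN_def using assms(7) by (simp add: divide_right_mono)
  finally have d: "0 \<le> d" "d \<le> 1 / real n" using assms(8) by (auto simp: d_def)
  have "1 / real n \<le> 1" by (auto simp: divide_le_eq_1)
  have "Zfun y x q * bid_deriv M x q
      \<le> (if q \<in> {0..d} then exp 1 * deriv y d else 0)
        + (if q \<in> {1 - d..1} then exp 1 * d * deriv y (1 - d) else 0)"
    if q: "q \<in> {0..d} \<union> {1 - d..1}" for q
  proof (rule order_trans[OF Zfun_mult_bid_deriv_le])
    have "0 \<le> q" "q \<le> 1" using q d \<open>1 / real n \<le> 1\<close> by auto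
    then show "value_of_quantile M q \<le> 1" "0 \<le> (1 - q) * deriv y q"
      using value_of_quantile_le_one[OF assms(1,2)] deriv_rank_based_alloc_nonneg[OF assms(6)] by auto
  qed (rule one_minus_mult_deriv_rank_based_alloc_le_steps[OF assms(6) d q])
  then have "integral ({0..d} \<union> {1 - d..1}) (\<lambda>q. Zfun y x q * bid_deriv M x q)
      \<le> exp 1 * deriv y d * d + exp 1 * d * deriv y (1 - d) * d"
    using d \<open>1 / real n \<le> 1\<close> deriv_rank_based_alloc_nonneg[OF assms(6)]
    by (intro integral_le_of_has_integral_majorant[OF has_integral_step_on_end_intervals]) auto
  then show ?thesis by (simp add: d_def power2_eq_square mult_ac)
qed

end
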